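(* Let $n\geq 3$, let $X=\mathbb{R}^n$ or $X=S^n$ (the unit sphere in $\mathbb{R}^{n+1}$), and let $\Gamma=\mathrm{Isom}(X)$. Then there exist uncountable sets $W\subset X$ whose pointwise stabilizer in $\Gamma$ is trivial but for which $P(W)$ (with respect to $\Gamma$ and $2$ colors) does not hold; i.e., there is a precoloring $X\setminus W\to\{R,B\}$ admitting no $\Gamma$-distinguishing extension to $X$. In particular $\mathrm{ext}_D(X,\Gamma)=\infty$.
   Context: Let a group $\Gamma$ act faithfully on a set $X$. A coloring $c:X\to\{R,B\}$ is $\Gamma$-distinguishing if the only $\gamma\in\Gamma$ with $c\circ\gamma=c$ is the identity. For $W\subset X$ whose pointwise stabilizer in $\Gamma$ is trivial, the property $P(W)$ holds if every precoloring $c:X\setminus W\to\{R,B\}$ can be extended to a $\Gamma$-distinguishing coloring $X\to\{R,B\}$. The distinguishing extension number $\mathrm{ext}_D(X,\Gamma)$ is the smallest $m$ such that every $W\subset X$ with $|W|\geq m$ and trivial pointwise stabilizer satisfies $P(W)$ ($\infty$ if none exists). *)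

theory Defs
  imports "HOL-Analysis.Analysis" "HOL-Library.Extended_Nat"
begin

text \<open>Colorings with two colors R, B are encoded as functions into bool
  (True = R, False = B). A group acting on a set X is given as a set G of
  maps; two maps are identified when they agree on X.\<close>

definition isom :: "'a::metric_space set \<Rightarrow> ('a \<Rightarrow> 'a) set" where
  "isom X = {g. bij_betw g X X \<and> (\<forall>x\<in>X. \<forall>y\<in>X. dist (g x) (g y) = dist x y)}"

definition distinguishing :: "'a set \<Rightarrow> ('a \<Rightarrow> 'a) set \<Rightarrow> ('a \<Rightarrow> bool) \<Rightarrow> bool" where
  "distinguishing X G c \<longleftrightarrow>
     (\<forall>g\<in>G. (\<forall>x\<in>X. c (g x) = c x) \<longrightarrow> (\<forall>x\<in>X. g x = x))"

definition trivial_pointwise_stab :: "'a set \<Rightarrow> ('a \<Rightarrow> 'a) set \<Rightarrow> 'a set \<Rightarrow> bool" where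
  "trivial_pointwise_stab X G W \<longleftrightarrow>
     (\<forall>g\<in>G. (\<forall>w\<in>W. g w = w) \<longrightarrow> (\<forall>x\<in>X. g x = x))"

definition prop_P :: "'a set \<Rightarrow> ('a \<Rightarrow> 'a) set \<Rightarrow> 'a set \<Rightarrow> bool" where
  "prop_P X G W \<longleftrightarrow>
     (\<forall>c0 :: 'a \<Rightarrow> bool. \<exists>c. (\<forall>x\<in>X - W. c x = c0 x) \<and> distinguishing X G c)"

definition ecard :: "'a set \<Rightarrow> enat" where
  "ecard A = (if finite A then enat (card A) else \<infinity>)"

definition ext_D :: "'a set \<Rightarrow> ('a \<Rightarrow> 'a) set \<Rightarrow> enat" where
  "ext_D X G = Inf {m. \<forall>W. W \<subseteq> X \<and> ecard W \<ge> m \<and> trivial_pointwise_stab X G W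
                               \<longrightarrow> prop_P X G W}"

end

theory Submission imports Defs begin

text \<open>Let \<open>u, v\<close> be two orthonormal vectors and let \<open>W\<close> consist of \<open>u\<close>, \<open>v\<close> and all
  points of \<open>X\<close> orthogonal to both; for \<open>n \<ge> 3\<close> this set is uncountable and contains
  \<open>0\<close> (for \<open>X = \<real>\<^sup>n\<close>) and every standard basis vector, so only the identity fixes it
  pointwise. Precolour \<open>X - W\<close> entirely with one colour. The reflection in \<open>u\<^sup>\<bottom>\<close>
  moves only \<open>u\<close> among the points of \<open>W\<close>, so a distinguishing extension must give \<open>u\<close>
  the other colour, and likewise \<open>v\<close>; but then the reflection in \<open>(u - v)\<^sup>\<bottom>\<close>, which swaps
  \<open>u\<close> and \<open>v\<close> and fixes the rest of \<open>W\<close>, preserves the colouring. Since \<open>W\<close> is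
  infinite, no finite threshold \<open>m\<close> works, i.e. \<open>ext_D = \<infinity>\<close>.\<close>

lemma coloring_preserved_if_image_eq:
  assumes "bij_betw g X X" "A \<subseteq> X" "g ` A = A"
    and "\<forall>x\<in>A. c (g x) = c x" and "\<forall>x\<in>X - A. \<forall>y\<in>X - A. c x = c y"
  shows "\<forall>x\<in>X. c (g x) = c x"
proof
  fix x assume x: "x \<in> X"
  show "c (g x) = c x"
  proof (cases "x \<in> A")
    case False
    have "g x \<notin> A"
      using inj_on_image_mem_iff[OF bij_betw_imp_inj_on[OF assms(1)] x assms(2)] False assms(3) by simp
    moreover have "g x \<in> X" using assms(1) x by (rule bij_betw_apply)
    ultimately show ?thesis using assms(5) x False by blast
  qed (use assms(4) in blast)
qed

lemma not_prop_P_if_two_movable_points: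
  assumes G: "\<forall>g\<in>G. bij_betw g X X" and W: "W \<subseteq> X" "a \<in> W" "b \<in> W" "a \<noteq> b"
    and ga: "ga \<in> G" "\<forall>w\<in>W - {a}. ga w = w" "ga a \<noteq> a"
    and gb: "gb \<in> G" "\<forall>w\<in>W - {b}. gb w = w" "gb b \<noteq> b"
    and gc: "gc \<in> G" "\<forall>w\<in>W - {a, b}. gc w = w" "gc a = b" "gc b = a"
  shows "\<not> prop_P X G W"
proof
  assume "prop_P X G W"
  then have "\<exists>c. (\<forall>x\<in>X - W. c x = (\<lambda>_. True) x) \<and> distinguishing X G c"
    unfolding prop_P_def by (rule spec)
  then obtain c where c_outside: "\<forall>x\<in>X - W. c x" and "distinguishing X G c"
    by auto
  then have fixes_if_preserves: "g x = x" if "g \<in> G" "\<forall>x\<in>X. c (g x) = c x" "x \<in> X" for g x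
    using that unfolding distinguishing_def by blast
  have not_c_if_only_moved: "\<not> c p" if "p \<in> W" "g \<in> G" "\<forall>w\<in>W - {p}. g w = w" "g p \<noteq> p" for p g
  proof
    assume "c p"
    have "\<forall>x\<in>X. c (g x) = c x"
    proof (rule coloring_preserved_if_image_eq)
      show "bij_betw g X X" using G \<open>g \<in> G\<close> by blast
      show "g ` (W - {p}) = W - {p}"
        using image_cong[OF refl, of "W - {p}" g "\<lambda>x. x"] that(3) by simp
      show "\<forall>x\<in>X - (W - {p}). \<forall>y\<in>X - (W - {p}). c x = c y"
        using c_outside \<open>c p\<close> by blast
    qed (use W that(3) in auto)
    then have "g p = p" by (rule fixes_if_preserves[OF that(2)]) (use W that(1) in blast)
    with that(4) show False by contradiction
  qed
  have "\<not> c a" by (rule not_c_if_only_moved[OF W(2) ga])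
  have "\<not> c b" by (rule not_c_if_only_moved[OF W(3) gb])
  have "\<forall>x\<in>X. c (gc x) = c x"
  proof (rule coloring_preserved_if_image_eq)
    show "bij_betw gc X X" using G gc(1) by blast
    have "gc w \<in> W \<and> w \<in> gc ` W \<and> c (gc w) = c w" if "w \<in> W" for w
    proof -
      from that consider "w = a" | "w = b" | "w \<in> W - {a, b}" by blast
      then show ?thesis
      proof cases
        case 3
        then show ?thesis using gc(2) that by (simp add: rev_image_eqI)
      qed (use W gc(3,4) \<open>\<not> c a\<close> \<open>\<not> c b\<close> in \<open>auto intro: rev_image_eqI\<close>)
    qed
    then show "gc ` W = W" "\<forall>x\<in>W. c (gc x) = c x" by blast+
  qed (use W c_outside in auto)
  then have "gc a = a" by (rule fixes_if_preserves[OF gc(1)]) (use W in blast)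
  with gc(3) W(4) show False by simp
qed

lemma ext_D_eq_infinity_if_not_prop_P:
  assumes "W \<subseteq> X" "infinite W" "trivial_pointwise_stab X G W" "\<not> prop_P X G W"
  shows "ext_D X G = \<infinity>"
proof -
  have "{m. \<forall>W. W \<subseteq> X \<and> ecard W \<ge> m \<and> trivial_pointwise_stab X G W \<longrightarrow> prop_P X G W} = {}"
    using assms by (auto simp: ecard_def)
  then show ?thesis unfolding ext_D_def by (metis Inf_empty top_enat_def)
qed

definition reflection :: "'a::real_inner \<Rightarrow> 'a \<Rightarrow> 'a" where
  "reflection v x = x - (2 * (x \<bullet> v) / (v \<bullet> v)) *\<^sub>R v"

lemma orthogonal_transformation_reflection: "orthogonal_transformation (reflection v)"
proof (cases "v = 0")
  case False
  have "linear (reflection v)"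
    by (rule linearI) (simp_all add: reflection_def algebra_simps add_divide_distrib)
  moreover have "reflection v x \<bullet> reflection v y = x \<bullet> y" for x y
    using False by (simp add: reflection_def inner_diff_left inner_diff_right inner_commute field_simps)
  ultimately show ?thesis unfolding orthogonal_transformation_def by blast
next
  case True
  then have "reflection v = (\<lambda>x. x)" by (simp add: reflection_def fun_eq_iff)
  then show ?thesis by simp
qed

lemma reflection_fixes_orthogonal: "x \<bullet> v = 0 \<Longrightarrow> reflection v x = x"
  by (simp add: reflection_def)

lemma reflection_self: "reflection v v = - v"
  by (cases "v = 0") (simp_all add: reflection_def scaleR_2)

lemma reflection_self_neq:
  assumes "v \<noteq> 0"
  shows "reflection v v \<noteq> v"
  using assms by (metis reflection_self add.right_inverse scaleR_2 scaleR_eq_0_iff zero_neq_numeral)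

lemma reflection_uminus: "reflection (- v) = reflection v"
  by (simp add: reflection_def fun_eq_iff)

lemma reflection_swaps:
  assumes "norm a = norm b"
  shows "reflection (a - b) a = b"
proof (cases "a = b")
  case False
  have "a \<bullet> a = b \<bullet> b" using assms by (simp add: dot_square_norm)
  then have "(a - b) \<bullet> (a - b) = 2 * (a \<bullet> (a - b))"
    by (simp add: inner_diff_left inner_diff_right inner_commute)
  moreover have "(a - b) \<bullet> (a - b) \<noteq> 0" using False by simp
  ultimately show ?thesis by (simp add: reflection_def)
qed (simp add: reflection_def)

lemma orthogonal_transformation_in_isom_UNIV:
  fixes g :: "'a::euclidean_space \<Rightarrow> 'a"
  assumes "orthogonal_transformation g"
  shows "g \<in> isom UNIV"
  using assms orthogonal_transformation_bij orthogonal_transformation_isometry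
  unfolding isom_def bij_def by blast

lemma orthogonal_transformation_in_isom_sphere:
  fixes g :: "'a::euclidean_space \<Rightarrow> 'a"
  assumes "orthogonal_transformation g"
  shows "g \<in> isom (sphere 0 r)"
proof -
  have "bij_betw g (sphere 0 r) (sphere 0 r)"
  proof (rule bij_betw_byWitness[where f' = "inv g"])
    have "orthogonal_transformation (inv g)" using assms by (rule orthogonal_transformation_inv)
    then show "inv g ` sphere 0 r \<subseteq> sphere 0 r" "g ` sphere 0 r \<subseteq> sphere 0 r"
      using assms by (auto simp: orthogonal_transformation_norm)
    show "\<forall>x\<in>sphere 0 r. inv g (g x) = x" "\<forall>y\<in>sphere 0 r. g (inv g y) = y"
      using orthogonal_transformation_bij[OF assms] by (simp_all add: bij_is_inj bij_is_surj surj_f_inv_f)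
  qed
  then show ?thesis
    using assms orthogonal_transformation_isometry unfolding isom_def by blast
qed

lemma eq_if_norm_eq_and_dist_Basis_eq:
  fixes x y :: "'a::euclidean_space"
  assumes "norm y = norm x" and "\<And>b. b \<in> Basis \<Longrightarrow> dist y b = dist x b"
  shows "y = x"
proof (rule euclidean_eqI)
  fix b :: 'a assume b: "b \<in> Basis"
  have "(dist y b)\<^sup>2 = (dist x b)\<^sup>2" using assms(2)[OF b] by simp
  then have "(y - b) \<bullet> (y - b) = (x - b) \<bullet> (x - b)" by (simp add: dist_norm power2_norm_eq_inner)
  moreover have "y \<bullet> y = x \<bullet> x" using assms(1) by (metis power2_norm_eq_inner)
  ultimately show "y \<bullet> b = x \<bullet> b" by (simp add: inner_diff inner_commute)
qed

lemma isom_fixing_Basis_fixes_point: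
  fixes g :: "'a::euclidean_space \<Rightarrow> 'a"
  assumes "g \<in> isom X" "\<forall>w\<in>W. g w = w" "Basis \<subseteq> W" "W \<subseteq> X" "x \<in> X"
    and "norm (g x) = norm x"
  shows "g x = x"
proof (rule eq_if_norm_eq_and_dist_Basis_eq[OF assms(6)])
  fix b :: 'a assume "b \<in> Basis"
  then have "b \<in> W" "g b = b" using assms(2,3) by auto
  moreover have "dist (g x) (g b) = dist x b"
    using assms(1,4,5) \<open>b \<in> W\<close> unfolding isom_def by blast
  ultimately show "dist (g x) b = dist x b" by simp
qed

lemma trivial_pointwise_stab_UNIV:
  fixes W :: "'a::euclidean_space set"
  assumes "0 \<in> W" "Basis \<subseteq> W"
  shows "trivial_pointwise_stab UNIV (isom UNIV) W"
  unfolding trivial_pointwise_stab_def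
proof (intro ballI impI)
  fix g x assume g: "g \<in> isom UNIV" and fixes_W: "\<forall>w\<in>W. g w = w"
  have "dist (g x) (g 0) = dist x 0" using g unfolding isom_def by blast
  then have "norm (g x) = norm x" using fixes_W assms(1) by simp
  then show "g x = x" using isom_fixing_Basis_fixes_point g fixes_W assms(2) by blast
qed

lemma trivial_pointwise_stab_sphere:
  fixes W :: "'a::euclidean_space set"
  assumes "Basis \<subseteq> W" "W \<subseteq> sphere 0 1"
  shows "trivial_pointwise_stab (sphere 0 1) (isom (sphere 0 1)) W"
  unfolding trivial_pointwise_stab_def
proof (intro ballI impI)
  fix g x assume g: "g \<in> isom (sphere 0 1)" and fixes_W: "\<forall>w\<in>W. g w = w"
    and x: "x \<in> sphere (0::'a) 1"
  have "bij_betw g (sphere 0 1) (sphere 0 1)" using g by (simp add: isom_def)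
  then have "g x \<in> sphere 0 1" using x by (rule bij_betw_apply)
  then have "norm (g x) = norm x" using x by simp
  then show "g x = x" using isom_fixing_Basis_fixes_point g fixes_W assms x by blast
qed

lemma not_prop_P_orthonormal_pair:
  fixes u v :: "'a::euclidean_space"
  assumes "norm u = 1" "norm v = 1" "u \<bullet> v = 0"
    and W: "W \<subseteq> X" "u \<in> W" "v \<in> W" "\<forall>w\<in>W - {u, v}. w \<bullet> u = 0 \<and> w \<bullet> v = 0"
    and orthogonal_isom: "\<And>g. orthogonal_transformation g \<Longrightarrow> g \<in> isom X"
  shows "\<not> prop_P X (isom X) W"
proof (rule not_prop_P_if_two_movable_points
    [where a = u and b = v and ga = "reflection u" and gb = "reflection v" and gc = "reflection (u - v)"])
  have "v \<bullet> u = 0" using assms(3) by (simp add: inner_commute)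
  then show "\<forall>w\<in>W - {u}. reflection u w = w" "\<forall>w\<in>W - {v}. reflection v w = w"
    "\<forall>w\<in>W - {u, v}. reflection (u - v) w = w"
    using assms(3) W(4) by (auto intro: reflection_fixes_orthogonal simp: inner_diff_right)
  have "u \<noteq> 0" "v \<noteq> 0" using assms(1,2) by auto
  then show "reflection u u \<noteq> u" "reflection v v \<noteq> v" by (simp_all add: reflection_self_neq)
  have "reflection (u - v) = reflection (v - u)" using reflection_uminus[of "v - u"] by simp
  then show "reflection (u - v) u = v" "reflection (u - v) v = u"
    using reflection_swaps[of u v] reflection_swaps[of v u] assms(1,2) by simp_all
  show "reflection u \<in> isom X" "reflection v \<in> isom X" "reflection (u - v) \<in> isom X"
    by (simp_all add: orthogonal_isom orthogonal_transformation_reflection)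
  show "\<forall>g\<in>isom X. bij_betw g X X" by (simp add: isom_def)
  show "u \<noteq> v" using assms(1,3) by (auto simp: norm_eq_1)
qed (fact W)+

lemma Basis_obtain_three:
  assumes "3 \<le> DIM('a)"
  obtains u v w :: "'a::euclidean_space"
  where "u \<in> Basis" "v \<in> Basis" "w \<in> Basis" "u \<noteq> v" "u \<noteq> w" "v \<noteq> w"
proof -
  obtain B :: "'a set" where "B \<subseteq> Basis" "card B = 3"
    using assms obtain_subset_with_card_n by metis
  then show ?thesis using that by (auto simp: card_3_iff)
qed

lemma Basis_obtain_four:
  assumes "4 \<le> DIM('a)"
  obtains u v w z :: "'a::euclidean_space"
  where "u \<in> Basis" "v \<in> Basis" "w \<in> Basis" "z \<in> Basis"
    "u \<noteq> v" "u \<noteq> w" "u \<noteq> z" "v \<noteq> w" "v \<noteq> z" "w \<noteq> z"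
proof -
  have "Suc 3 \<le> card (Basis :: 'a set)" using assms by simp
  then obtain B :: "'a set" where B: "B \<subseteq> Basis" "card B = Suc 3"
    by (rule obtain_subset_with_card_n)
  then obtain z B' where "B = insert z B'" "z \<notin> B'" "card B' = 3"
    unfolding card_Suc_eq by blast
  moreover from \<open>card B' = 3\<close> obtain u v w where "B' = {u, v, w}" "u \<noteq> v" "v \<noteq> w" "u \<noteq> w"
    by (auto simp: card_3_iff)
  ultimately show ?thesis using that[of u v w z] B(1) by auto
qed

lemma euclidean_counterexample:
  assumes "3 \<le> DIM('a::euclidean_space)"
  shows "\<exists>W \<subseteq> (UNIV :: 'a set). uncountable W
           \<and> trivial_pointwise_stab UNIV (isom UNIV) W \<and> \<not> prop_P UNIV (isom UNIV) W"
proof -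
  obtain u v w :: 'a
    where basis: "u \<in> Basis" "v \<in> Basis" "w \<in> Basis" "u \<noteq> v" "u \<noteq> w" "v \<noteq> w"
    by (rule Basis_obtain_three[OF assms])
  define W where "W = {x \<in> UNIV. x \<bullet> u = 0 \<and> x \<bullet> v = 0} \<union> {u, v}"
  have "UNIV \<subseteq> (\<lambda>x. x \<bullet> w) ` W"
  proof
    fix t :: real
    have "t *\<^sub>R w \<in> W" using basis by (simp add: W_def inner_not_same_Basis inner_commute)
    moreover have "(t *\<^sub>R w) \<bullet> w = t" using basis by simp
    ultimately show "t \<in> (\<lambda>x. x \<bullet> w) ` W" by (metis rev_image_eqI)
  qed
  then have "uncountable W" using uncountable_UNIV_real by (meson countable_image countable_subset)
  moreover have "trivial_pointwise_stab UNIV (isom UNIV) W"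
    by (rule trivial_pointwise_stab_UNIV) (use basis in \<open>auto simp: W_def inner_not_same_Basis\<close>)
  moreover have "\<not> prop_P UNIV (isom UNIV) W"
    by (rule not_prop_P_orthonormal_pair[where u = u and v = v, OF _ _ _ _ _ _ _ orthogonal_transformation_in_isom_UNIV])
      (use basis in \<open>simp_all add: W_def inner_not_same_Basis\<close>)
  ultimately show ?thesis by blast
qed

lemma sphere_counterexample:
  assumes "4 \<le> DIM('a::euclidean_space)"
  shows "\<exists>W \<subseteq> sphere (0 :: 'a) 1. uncountable W
           \<and> trivial_pointwise_stab (sphere 0 1) (isom (sphere 0 1)) W
           \<and> \<not> prop_P (sphere 0 1) (isom (sphere 0 1)) W"
proof -
  obtain u v w z :: 'a
    where basis: "u \<in> Basis" "v \<in> Basis" "w \<in> Basis" "z \<in> Basis"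
      "u \<noteq> v" "u \<noteq> w" "u \<noteq> z" "v \<noteq> w" "v \<noteq> z" "w \<noteq> z"
    by (rule Basis_obtain_four[OF assms])
  have orth: "w \<bullet> z = 0" "z \<bullet> w = 0" "w \<bullet> u = 0" "z \<bullet> u = 0" "w \<bullet> v = 0" "z \<bullet> v = 0"
    using basis by (simp_all add: inner_not_same_Basis)
  define W where "W = {x \<in> sphere 0 1. x \<bullet> u = 0 \<and> x \<bullet> v = 0} \<union> {u, v}"
  have "{-1..1} \<subseteq> (\<lambda>x. x \<bullet> w) ` W"
  proof
    fix t :: real assume "t \<in> {-1..1}"
    then have "t\<^sup>2 \<le> 1" by (simp add: abs_square_le_1 abs_le_iff)
    define p where "p = t *\<^sub>R w + sqrt (1 - t\<^sup>2) *\<^sub>R z"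
    have "p \<bullet> p = t\<^sup>2 + (sqrt (1 - t\<^sup>2))\<^sup>2"
      using basis by (simp add: p_def inner_add_left inner_add_right orth power2_eq_square)
    also have "\<dots> = 1" using \<open>t\<^sup>2 \<le> 1\<close> by simp
    finally have "norm p = 1" by (simp add: norm_eq_1)
    moreover have "p \<bullet> u = 0" "p \<bullet> v = 0" "p \<bullet> w = t"
      using basis(3) by (simp_all add: p_def inner_add_left orth)
    ultimately have "p \<in> W" "t = p \<bullet> w" by (simp_all add: W_def)
    then show "t \<in> (\<lambda>x. x \<bullet> w) ` W" by (rule rev_image_eqI)
  qed
  moreover have "uncountable {-1..1::real}" by (simp add: uncountable_closed_interval)
  ultimately have "uncountable W" by (meson countable_image countable_subset)
  moreover have "W \<subseteq> sphere 0 1" using basis(1,2) by (auto simp: W_def)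
  moreover have "trivial_pointwise_stab (sphere 0 1) (isom (sphere 0 1)) W"
    using \<open>W \<subseteq> sphere 0 1\<close>
    by (intro trivial_pointwise_stab_sphere) (use basis in \<open>auto simp: W_def inner_not_same_Basis\<close>)
  moreover have "\<not> prop_P (sphere 0 1) (isom (sphere 0 1)) W"
    by (rule not_prop_P_orthonormal_pair[where u = u and v = v, OF _ _ _ _ _ _ _ orthogonal_transformation_in_isom_sphere])
      (use basis \<open>W \<subseteq> sphere 0 1\<close> in \<open>simp_all add: W_def inner_not_same_Basis\<close>)
  ultimately show ?thesis by blast
qed

theorem theorem2:
  assumes "CARD('n::finite) \<ge> 3" and "CARD('m::finite) \<ge> 4"
  shows "(\<exists>W \<subseteq> (UNIV :: (real^'n) set). uncountable W
            \<and> trivial_pointwise_stab UNIV (isom UNIV) W \<and> \<not> prop_P UNIV (isom UNIV) W)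
       \<and> ext_D (UNIV :: (real^'n) set) (isom UNIV) = \<infinity>
       \<and> (\<exists>W \<subseteq> sphere (0 :: real^'m) 1. uncountable W
            \<and> trivial_pointwise_stab (sphere 0 1) (isom (sphere 0 1)) W
            \<and> \<not> prop_P (sphere 0 1) (isom (sphere 0 1)) W)
       \<and> ext_D (sphere (0 :: real^'m) 1) (isom (sphere 0 1)) = \<infinity>"
proof -
  have dims: "3 \<le> DIM(real^'n)" "4 \<le> DIM(real^'m)" using assms by simp_all
  obtain W :: "(real^'n) set" where W: "uncountable W"
      "trivial_pointwise_stab UNIV (isom UNIV) W" "\<not> prop_P UNIV (isom UNIV) W"
    using euclidean_counterexample[OF dims(1)] by blast
  obtain V :: "(real^'m) set" where V: "V \<subseteq> sphere 0 1" "uncountable V"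
      "trivial_pointwise_stab (sphere 0 1) (isom (sphere 0 1)) V"
      "\<not> prop_P (sphere 0 1) (isom (sphere 0 1)) V"
    using sphere_counterexample[OF dims(2)] by blast
  have "ext_D (UNIV :: (real^'n) set) (isom UNIV) = \<infinity>"
    using W(1) countable_finite by (intro ext_D_eq_infinity_if_not_prop_P[OF subset_UNIV _ W(2,3)]) blast
  moreover have "ext_D (sphere (0 :: real^'m) 1) (isom (sphere 0 1)) = \<infinity>"
    using V(2) countable_finite by (intro ext_D_eq_infinity_if_not_prop_P[OF V(1) _ V(3,4)]) blast
  ultimately show ?thesis using W V by blast
qed

end
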